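(* Let $d\ge1$, $\kappa>0$, $\rho>0$, and let $x$ be a random vector in $\mathbb{R}^d$ such that $\mathbb{P}(\|x\|>u)\le2e^{-u^2/(2\kappa^2)}$ for all $u\in\mathbb{R}$ and $\Sigma:=\mathbb{E}[(x-\mathbb{E}x)(x-\mathbb{E}x)^T]\succeq\rho I$. Let $\delta\in(0,\frac12)$ and let $\mathcal G$ be an event with $\mathbb{P}(\mathcal G)\le\delta$, with complement $\mathcal G^c$. Then $$\tilde\Sigma:=\mathbb{E}\Big[\big(x-\mathbb{E}[x\mid\mathcal G^c]\big)\big(x-\mathbb{E}[x\mid\mathcal G^c]\big)^T\,\Big|\,\mathcal G^c\Big]\succeq\big(\rho-105\kappa^2\sqrt\delta\big)I.$$
   Context: $A\succeq B$ means $A-B$ is positive semidefinite; $I$ is the $d\times d$ identity matrix. *)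

theory Defs
  imports "HOL-Probability.Probability"
begin

definition psd_ge :: "real^'n^'n \<Rightarrow> real^'n^'n \<Rightarrow> bool" where
  "psd_ge A B \<longleftrightarrow> (\<forall>v::real^'n. 0 \<le> v \<bullet> ((A - B) *v v))"

definition mean_vec :: "'a measure \<Rightarrow> ('a \<Rightarrow> real^'n) \<Rightarrow> real^'n" where
  "mean_vec M x = (\<chi> i. \<integral>\<omega>. x \<omega> $ i \<partial>M)"

definition cov_mat :: "'a measure \<Rightarrow> ('a \<Rightarrow> real^'n) \<Rightarrow> real^'n^'n" where
  "cov_mat M x = (let m = mean_vec M x in
     \<chi> i j. \<integral>\<omega>. (x \<omega> $ i - m $ i) * (x \<omega> $ j - m $ j) \<partial>M)"

definition cond_mean_vec :: "'a measure \<Rightarrow> 'a set \<Rightarrow> ('a \<Rightarrow> real^'n) \<Rightarrow> real^'n" where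
  "cond_mean_vec M A x = (\<chi> i. (\<integral>\<omega>. indicator A \<omega> * x \<omega> $ i \<partial>M) / measure M A)"

definition cond_cov_mat :: "'a measure \<Rightarrow> 'a set \<Rightarrow> ('a \<Rightarrow> real^'n) \<Rightarrow> real^'n^'n" where
  "cond_cov_mat M A x = (let m = cond_mean_vec M A x in
     \<chi> i j. (\<integral>\<omega>. indicator A \<omega> * ((x \<omega> $ i - m $ i) * (x \<omega> $ j - m $ j)) \<partial>M) / measure M A)"

end

theory Submission
  imports Defs
begin

(* Summing the sub-Gaussian tail over the levels |x|^2 = 2 k kappa^2 gives E |x|^4 <= 72 kappa^4.
   Fix a direction v and let y = v . x and u = y - E y. Removing the event G, of probability at
   most delta, loses the part E[1_G u^2] <= sqrt(delta) sqrt(E u^4) of the variance and moves the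
   mean by some d with P(G^c) d^2 <= E[1_G u^2]. Hence the variance of y conditioned on G^c is at
   least Var y - 2 sqrt(delta) sqrt(E u^4), and E u^4 <= 16 E y^4 <= 16 * 72 |v|^4 kappa^4 bounds
   the loss by 8 sqrt(72) kappa^2 sqrt(delta) |v|^2 <= 105 kappa^2 sqrt(delta) |v|^2. *)

section \<open>Fourth moment of a sub-Gaussian variable\<close>

lemma exp_ge_nine_fourths_power: "(9/4::real) ^ k \<le> exp (real k)"
proof -
  have "3/2 \<le> exp (1/2::real)"
    using exp_ge_add_one_self[of "1/2::real"] by simp
  then have "(3/2::real) ^ (2 * k) \<le> exp (1/2) ^ (2 * k)"
    by (intro power_mono) auto
  also have "\<dots> = exp (real k)"
    by (simp add: exp_of_nat_mult[symmetric])
  finally show ?thesis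
    by (simp add: power_mult power2_eq_square)
qed

lemma odd_le_three_halves_power: "2 * real k + 1 \<le> 3 * (3/2::real) ^ k"
proof (induction k)
  case 0
  then show ?case by simp
next
  case (Suc k)
  show ?case
  proof (cases "k \<le> 1")
    case True
    then have "k = 0 \<or> k = 1" by auto
    then show ?thesis by auto
  next
    case False
    then have "2 * real (Suc k) + 1 \<le> 3/2 * (2 * real k + 1)" by simp
    also have "\<dots> \<le> 3/2 * (3 * (3/2) ^ k)" using Suc.IH by simp
    finally show ?thesis by simp
  qed
qed

lemma odd_times_tail_le_geometric:
  "(2 * real k + 1) * (2 * exp (- real k)) \<le> 6 * (2/3::real) ^ k"
proof -
  have "(2 * real k + 1) * exp (- real k) = (2 * real k + 1) / exp (real k)"
    by (simp add: exp_minus divide_inverse)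
  also have "\<dots> \<le> 3 * (3/2) ^ k / (9/4) ^ k"
    using odd_le_three_halves_power exp_ge_nine_fourths_power by (intro frac_le) auto
  also have "\<dots> = 3 * ((3/2) / (9/4)) ^ k"
    by (simp only: power_divide times_divide_eq_right)
  also have "\<dots> = 3 * (2/3) ^ k"
    by simp
  finally show ?thesis by (simp add: mult.commute)
qed

lemma suminf_odd_times_tail_le:
  "(\<Sum>k. ennreal ((2 * real k + 1) * (2 * exp (- real k)))) \<le> ennreal 18"
proof -
  have "(\<Sum>k. ennreal ((2 * real k + 1) * (2 * exp (- real k)))) \<le> (\<Sum>k. ennreal (6 * (2/3) ^ k))"
    by (intro suminf_le ennreal_leI odd_times_tail_le_geometric) auto
  also have "\<dots> = ennreal 18"
    using suminf_geometric[of "2/3::real"] by (subst suminf_ennreal2) (auto simp: suminf_mult)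
  finally show ?thesis .
qed

lemma sum_odd_eq_square: "(\<Sum>k<n. 2 * real k + 1) = real n ^ 2"
  by (induction n) (auto simp: power2_eq_square algebra_simps)

lemma nn_integral_square_le_suminf_odd:
  fixes w :: "'a \<Rightarrow> real"
  assumes [measurable]: "w \<in> borel_measurable M"
    and nonneg: "\<And>\<omega>. \<omega> \<in> space M \<Longrightarrow> 0 \<le> w \<omega>"
  shows "(\<integral>\<^sup>+\<omega>. ennreal (w \<omega> ^ 2) \<partial>M)
    \<le> (\<Sum>k. ennreal (2 * real k + 1) * emeasure M {\<omega> \<in> space M. real k < w \<omega>})"
proof -
  define S where "S k = {\<omega> \<in> space M. real k < w \<omega>}" for k :: nat
  have [measurable]: "S k \<in> sets M" for k
    unfolding S_def by measurable
  have "ennreal (w \<omega> ^ 2) \<le> (\<Sum>k. ennreal (2 * real k + 1) * indicator (S k) \<omega>)"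
    if \<omega>: "\<omega> \<in> space M" for \<omega>
  proof -
    define n where "n = nat \<lceil>w \<omega>\<rceil>"
    have "w \<omega> ^ 2 \<le> real n ^ 2"
      unfolding n_def using nonneg[OF \<omega>] by (intro power_mono) linarith+
    then have "ennreal (w \<omega> ^ 2) \<le> ennreal (\<Sum>k<n. 2 * real k + 1)"
      by (simp add: sum_odd_eq_square)
    also have "\<dots> = (\<Sum>k<n. ennreal (2 * real k + 1))"
      by (rule sum_ennreal[symmetric]) simp
    also have "\<dots> = (\<Sum>k<n. ennreal (2 * real k + 1) * indicator (S k) \<omega>)"
    proof (intro sum.cong)
      fix k assume "k \<in> {..<n}"
      then have "real k < w \<omega>" unfolding n_def by auto linarith
      then show "ennreal (2 * real k + 1) = ennreal (2 * real k + 1) * indicator (S k) \<omega>"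
        using \<omega> by (simp add: S_def)
    qed simp
    also have "\<dots> \<le> (\<Sum>k. ennreal (2 * real k + 1) * indicator (S k) \<omega>)"
      by (rule sum_le_suminf) auto
    finally show ?thesis .
  qed
  then have "(\<integral>\<^sup>+\<omega>. ennreal (w \<omega> ^ 2) \<partial>M)
      \<le> (\<integral>\<^sup>+\<omega>. (\<Sum>k. ennreal (2 * real k + 1) * indicator (S k) \<omega>) \<partial>M)"
    by (intro nn_integral_mono)
  also have "\<dots> = (\<Sum>k. ennreal (2 * real k + 1) * emeasure M (S k))"
    by (simp add: nn_integral_suminf nn_integral_cmult_indicator)
  finally show ?thesis
    unfolding S_def .
qed

lemma subgaussian_fourth_moment:
  fixes f :: "'a \<Rightarrow> real"
  assumes "prob_space M" and [measurable]: "f \<in> borel_measurable M" and "0 < \<kappa>"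
    and tail: "\<And>u. measure M {\<omega> \<in> space M. \<bar>f \<omega>\<bar> > u} \<le> 2 * exp (- u\<^sup>2 / (2 * \<kappa>\<^sup>2))"
  shows "integrable M (\<lambda>\<omega>. f \<omega> ^ 4)" and "(\<integral>\<omega>. f \<omega> ^ 4 \<partial>M) \<le> 72 * \<kappa> ^ 4"
proof -
  interpret prob_space M by fact
  define w where "w \<omega> = (f \<omega>)\<^sup>2 / (2 * \<kappa>\<^sup>2)" for \<omega>
  have [measurable]: "w \<in> borel_measurable M"
    unfolding w_def by measurable
  have level_set: "{\<omega> \<in> space M. real k < w \<omega>}
      = {\<omega> \<in> space M. \<bar>f \<omega>\<bar> > sqrt (2 * real k) * \<kappa>}" for k :: nat
  proof -
    have "real k < w \<omega> \<longleftrightarrow> \<not> (f \<omega>)\<^sup>2 \<le> (sqrt (2 * real k) * \<kappa>)\<^sup>2" for \<omega>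
      unfolding w_def using \<open>0 < \<kappa>\<close> by (simp add: field_simps power_mult_distrib not_le)
    also have "\<not> (f \<omega>)\<^sup>2 \<le> (sqrt (2 * real k) * \<kappa>)\<^sup>2 \<longleftrightarrow> sqrt (2 * real k) * \<kappa> < \<bar>f \<omega>\<bar>" for \<omega>
      using \<open>0 < \<kappa>\<close> by (simp add: not_le flip: abs_le_square_iff)
    finally show ?thesis by auto
  qed
  have tail_level: "emeasure M {\<omega> \<in> space M. real k < w \<omega>} \<le> ennreal (2 * exp (- real k))"
    for k :: nat
    using tail[of "sqrt (2 * real k) * \<kappa>"] \<open>0 < \<kappa>\<close>
    by (simp add: level_set emeasure_eq_measure power_mult_distrib)
  have "(\<integral>\<^sup>+\<omega>. ennreal (w \<omega> ^ 2) \<partial>M)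
      \<le> (\<Sum>k. ennreal (2 * real k + 1) * emeasure M {\<omega> \<in> space M. real k < w \<omega>})"
    by (rule nn_integral_square_le_suminf_odd) (auto simp: w_def)
  also have "\<dots> \<le> (\<Sum>k. ennreal ((2 * real k + 1) * (2 * exp (- real k))))"
    using mult_left_mono[OF tail_level] by (intro suminf_le) (auto simp: ennreal_mult)
  also have "\<dots> \<le> ennreal 18"
    by (rule suminf_odd_times_tail_le)
  finally have w_bound: "(\<integral>\<^sup>+\<omega>. ennreal (w \<omega> ^ 2) \<partial>M) \<le> ennreal 18" .
  have int_w: "integrable M (\<lambda>\<omega>. w \<omega> ^ 2)"
    using le_less_trans[OF w_bound ennreal_less_top] by (intro integrableI_nonneg) auto
  have f_eq: "(\<lambda>\<omega>. f \<omega> ^ 4) = (\<lambda>\<omega>. 4 * \<kappa> ^ 4 * w \<omega> ^ 2)"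
    using \<open>0 < \<kappa>\<close> by (auto simp: w_def field_simps power2_eq_square eval_nat_numeral)
  show "integrable M (\<lambda>\<omega>. f \<omega> ^ 4)"
    unfolding f_eq using int_w by simp
  show "(\<integral>\<omega>. f \<omega> ^ 4 \<partial>M) \<le> 72 * \<kappa> ^ 4"
    unfolding f_eq using integral_real_bounded[OF _ w_bound] \<open>0 < \<kappa>\<close> by (simp add: mult.commute)
qed

lemma max_one_power_le:
  fixes N :: real
  assumes "0 \<le> N" and "k \<le> 4"
  shows "max 1 N ^ k \<le> 1 + N ^ 4"
proof -
  have "max 1 N ^ k \<le> max 1 N ^ 4"
    using assms by (intro power_increasing) auto
  also have "\<dots> \<le> 1 + N ^ 4"
    by (cases "N \<le> 1") (auto simp: max_def)
  finally show ?thesis .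
qed

lemma integrable_abs_le_affine_power:
  fixes g N :: "'a \<Rightarrow> real"
  assumes "finite_measure M" and "integrable M (\<lambda>\<omega>. N \<omega> ^ 4)" and "g \<in> borel_measurable M"
    and "k \<le> 4" and "0 \<le> \<alpha>" and "0 \<le> \<beta>"
    and N_nonneg: "\<And>\<omega>. \<omega> \<in> space M \<Longrightarrow> 0 \<le> N \<omega>"
    and g_le: "\<And>\<omega>. \<omega> \<in> space M \<Longrightarrow> \<bar>g \<omega>\<bar> \<le> (\<alpha> * N \<omega> + \<beta>) ^ k"
  shows "integrable M g"
proof (rule Bochner_Integration.integrable_bound)
  interpret finite_measure M by fact
  show "integrable M (\<lambda>\<omega>. (\<alpha> + \<beta>) ^ k * (1 + N \<omega> ^ 4))"
    using assms(2) by simp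
  show "AE \<omega> in M. norm (g \<omega>) \<le> norm ((\<alpha> + \<beta>) ^ k * (1 + N \<omega> ^ 4))"
  proof (rule AE_I2)
    fix \<omega> assume \<omega>: "\<omega> \<in> space M"
    have "\<alpha> * N \<omega> + \<beta> * 1 \<le> \<alpha> * max 1 (N \<omega>) + \<beta> * max 1 (N \<omega>)"
      using assms by (intro add_mono mult_left_mono) auto
    then have affine_le: "\<alpha> * N \<omega> + \<beta> \<le> (\<alpha> + \<beta>) * max 1 (N \<omega>)"
      by (simp add: distrib_right)
    have "\<bar>g \<omega>\<bar> \<le> (\<alpha> * N \<omega> + \<beta>) ^ k"
      by (rule g_le[OF \<omega>])
    also have "\<dots> \<le> ((\<alpha> + \<beta>) * max 1 (N \<omega>)) ^ k"
      using affine_le N_nonneg[OF \<omega>] assms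
      by (intro power_mono) auto
    also have "\<dots> \<le> (\<alpha> + \<beta>) ^ k * (1 + N \<omega> ^ 4)"
      unfolding power_mult_distrib using max_one_power_le[OF N_nonneg[OF \<omega>] \<open>k \<le> 4\<close>] assms
      by (intro mult_left_mono) auto
    finally show "norm (g \<omega>) \<le> norm ((\<alpha> + \<beta>) ^ k * (1 + N \<omega> ^ 4))"
      using N_nonneg[OF \<omega>] assms by simp
  qed
qed fact

lemma power_four_add_le: "(a + b) ^ 4 \<le> 8 * (a ^ 4 + b ^ 4)" for a b :: real
proof -
  have "(a + b)\<^sup>2 \<le> 2 * (a\<^sup>2 + b\<^sup>2)"
    using sum_squares_bound[of a b] by (simp add: power2_sum)
  then have "((a + b)\<^sup>2)\<^sup>2 \<le> (2 * (a\<^sup>2 + b\<^sup>2))\<^sup>2"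
    by (intro power_mono) auto
  also have "\<dots> \<le> 8 * (a ^ 4 + b ^ 4)"
    using sum_squares_bound[of "a\<^sup>2" "b\<^sup>2"] by (simp add: power2_sum power_mult_distrib power_mult[symmetric])
  finally show ?thesis
    by (simp add: power_mult[symmetric])
qed

lemma (in finite_measure) integrable_shifted_power:
  fixes y :: "'a \<Rightarrow> real"
  assumes "y \<in> borel_measurable M" and "integrable M (\<lambda>\<omega>. y \<omega> ^ 4)" and "k \<le> 4"
  shows "integrable M (\<lambda>\<omega>. (y \<omega> - c) ^ k)"
proof (rule integrable_abs_le_affine_power[where N = "\<lambda>\<omega>. \<bar>y \<omega>\<bar>" and \<alpha> = 1 and \<beta> = "\<bar>c\<bar>"])
  fix \<omega>
  show "\<bar>(y \<omega> - c) ^ k\<bar> \<le> (1 * \<bar>y \<omega>\<bar> + \<bar>c\<bar>) ^ k"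
    unfolding power_abs by (intro power_mono) auto
qed (use assms finite_measure_axioms in auto)

section \<open>Variance after removing a small event\<close>

context prob_space
begin

lemma square_expectation_le:
  fixes f :: "'a \<Rightarrow> real"
  assumes "integrable M f" and "integrable M (\<lambda>\<omega>. (f \<omega>)\<^sup>2)"
  shows "(expectation f)\<^sup>2 \<le> expectation (\<lambda>\<omega>. (f \<omega>)\<^sup>2)"
  using variance_positive[of f] variance_eq[OF assms] by simp

lemma central_fourth_moment_le:
  fixes y :: "'a \<Rightarrow> real"
  assumes "y \<in> borel_measurable M" and "integrable M (\<lambda>\<omega>. y \<omega> ^ 4)"
  shows "expectation (\<lambda>\<omega>. (y \<omega> - expectation y) ^ 4) \<le> 16 * expectation (\<lambda>\<omega>. y \<omega> ^ 4)"
proof -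
  have y1: "integrable M y" and y2: "integrable M (\<lambda>\<omega>. (y \<omega>)\<^sup>2)"
    and y4: "integrable M (\<lambda>\<omega>. ((y \<omega>)\<^sup>2)\<^sup>2)"
    and u4: "integrable M (\<lambda>\<omega>. (y \<omega> - expectation y) ^ 4)"
    using integrable_shifted_power[OF assms, of 1 0] integrable_shifted_power[OF assms, of 2 0]
      integrable_shifted_power[OF assms, of 4 0] integrable_shifted_power[OF assms, of 4 "expectation y"]
    by (simp_all add: power_mult[symmetric])
  have "((expectation y)\<^sup>2)\<^sup>2 \<le> (expectation (\<lambda>\<omega>. (y \<omega>)\<^sup>2))\<^sup>2"
    using square_expectation_le[OF y1 y2] by (intro power_mono) auto
  also have "\<dots> \<le> expectation (\<lambda>\<omega>. ((y \<omega>)\<^sup>2)\<^sup>2)"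
    using square_expectation_le[OF y2 y4] .
  finally have mean4: "expectation y ^ 4 \<le> expectation (\<lambda>\<omega>. y \<omega> ^ 4)"
    by (simp add: power_mult[symmetric])
  have "expectation (\<lambda>\<omega>. (y \<omega> - expectation y) ^ 4)
      \<le> expectation (\<lambda>\<omega>. 8 * (y \<omega> ^ 4 + expectation y ^ 4))"
    using u4 assms(2) power_four_add_le[of "y _" "- expectation y"] by (intro integral_mono) auto
  also have "\<dots> = 8 * expectation (\<lambda>\<omega>. y \<omega> ^ 4) + 8 * expectation y ^ 4"
    using assms(2) by (simp add: prob_space)
  finally show ?thesis
    using mean4 by linarith
qed

lemma integrable_indicator_event [simp]: "A \<in> events \<Longrightarrow> integrable M (indicator A :: 'a \<Rightarrow> real)"
  by (simp add: emeasure_eq_measure)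

lemma integrable_indicator_mult [simp]:
  fixes f :: "'a \<Rightarrow> real"
  shows "A \<in> events \<Longrightarrow> integrable M f \<Longrightarrow> integrable M (\<lambda>\<omega>. indicator A \<omega> * f \<omega>)"
  using integrable_mult_indicator[of A M f] by simp

lemma integral_indicator_compl_add:
  fixes f :: "'a \<Rightarrow> real"
  assumes "G \<in> events" and "integrable M f"
  shows "(\<integral>\<omega>. indicator (space M - G) \<omega> * f \<omega> \<partial>M) + (\<integral>\<omega>. indicator G \<omega> * f \<omega> \<partial>M)
    = expectation f"
proof -
  have "(\<integral>\<omega>. indicator (space M - G) \<omega> * f \<omega> \<partial>M) + (\<integral>\<omega>. indicator G \<omega> * f \<omega> \<partial>M)
      = (\<integral>\<omega>. indicator (space M - G) \<omega> * f \<omega> + indicator G \<omega> * f \<omega> \<partial>M)"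
    using assms by (simp add: Bochner_Integration.integral_add)
  also have "\<dots> = expectation f"
    using sets.sets_into_space[OF assms(1)]
    by (intro Bochner_Integration.integral_cong) (auto split: split_indicator)
  finally show ?thesis .
qed

lemma integral_indicator_square_shift:
  fixes u :: "'a \<Rightarrow> real"
  assumes "S \<in> events" and "integrable M u" and "integrable M (\<lambda>\<omega>. (u \<omega>)\<^sup>2)"
  shows "(\<integral>\<omega>. indicator S \<omega> * (u \<omega> + c)\<^sup>2 \<partial>M)
    = (\<integral>\<omega>. indicator S \<omega> * (u \<omega>)\<^sup>2 \<partial>M) + 2 * c * (\<integral>\<omega>. indicator S \<omega> * u \<omega> \<partial>M) + c\<^sup>2 * prob S"
proof -
  have "(\<integral>\<omega>. indicator S \<omega> * (u \<omega> + c)\<^sup>2 \<partial>M)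
      = (\<integral>\<omega>. indicator S \<omega> * (u \<omega>)\<^sup>2 + 2 * c * (indicator S \<omega> * u \<omega>) + c\<^sup>2 * indicator S \<omega> \<partial>M)"
    by (simp add: power2_sum algebra_simps)
  also have "\<dots> = (\<integral>\<omega>. indicator S \<omega> * (u \<omega>)\<^sup>2 \<partial>M) + 2 * c * (\<integral>\<omega>. indicator S \<omega> * u \<omega> \<partial>M)
      + c\<^sup>2 * prob S"
    using assms by simp
  finally show ?thesis .
qed

lemma mean_shift_off_event_le:
  fixes u :: "'a \<Rightarrow> real"
  assumes G: "G \<in> events" and "prob G \<le> 1/2"
    and u: "integrable M u" "integrable M (\<lambda>\<omega>. (u \<omega>)\<^sup>2)" and "expectation u = 0"
  shows "prob (space M - G) * ((\<integral>\<omega>. indicator (space M - G) \<omega> * u \<omega> \<partial>M) / prob (space M - G))\<^sup>2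
    \<le> (\<integral>\<omega>. indicator G \<omega> * (u \<omega>)\<^sup>2 \<partial>M)"
proof -
  define p where "p = prob (space M - G)"
  define d where "d = (\<integral>\<omega>. indicator (space M - G) \<omega> * u \<omega> \<partial>M) / p"
  have p: "prob G = 1 - p"
    unfolding p_def using prob_compl[OF G] by simp
  with assms have "1/2 \<le> p" by linarith
  then have "(\<integral>\<omega>. indicator (space M - G) \<omega> * u \<omega> \<partial>M) = p * d"
    by (simp add: d_def)
  then have EGu: "(\<integral>\<omega>. indicator G \<omega> * u \<omega> \<partial>M) = - p * d"
    using integral_indicator_compl_add[OF G u(1)] \<open>expectation u = 0\<close> by linarith
  have "0 \<le> (\<integral>\<omega>. indicator G \<omega> * (u \<omega> + d)\<^sup>2 \<partial>M)"
    by (intro integral_nonneg_AE) auto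
  also have "\<dots> = (\<integral>\<omega>. indicator G \<omega> * (u \<omega>)\<^sup>2 \<partial>M) - 2 * p * d\<^sup>2 + (1 - p) * d\<^sup>2"
    using integral_indicator_square_shift[OF G u(1,2), of d] EGu p
    by (simp add: power2_eq_square algebra_simps)
  finally show ?thesis
    using mult_right_mono[of "1/2" p "d\<^sup>2"] \<open>1/2 \<le> p\<close>
    unfolding p_def[symmetric] d_def[symmetric] by (simp add: algebra_simps)
qed

lemma second_moment_off_event_ge:
  fixes y :: "'a \<Rightarrow> real"
  assumes G: "G \<in> events" and "prob G \<le> 1/2"
    and y: "integrable M y" "integrable M (\<lambda>\<omega>. (y \<omega>)\<^sup>2)"
  shows "variance y - 2 * (\<integral>\<omega>. indicator G \<omega> * (y \<omega> - expectation y)\<^sup>2 \<partial>M)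
    \<le> (\<integral>\<omega>. indicator (space M - G) \<omega> *
          (y \<omega> - (\<integral>\<omega>. indicator (space M - G) \<omega> * y \<omega> \<partial>M) / prob (space M - G))\<^sup>2 \<partial>M)"
proof -
  define A where "A = space M - G"
  define p where "p = prob A"
  define u where "u \<omega> = y \<omega> - expectation y" for \<omega>
  define d where "d = (\<integral>\<omega>. indicator A \<omega> * u \<omega> \<partial>M) / p"
  have A: "A \<in> events"
    unfolding A_def using G by auto
  have "0 < p"
    unfolding p_def A_def using prob_compl[OF G] assms by simp
  have u: "integrable M u" "integrable M (\<lambda>\<omega>. (u \<omega>)\<^sup>2)"
    using y unfolding u_def by (simp_all add: power2_diff)
  have EAu: "(\<integral>\<omega>. indicator A \<omega> * u \<omega> \<partial>M) = p * d"
    using \<open>0 < p\<close> by (simp add: d_def)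
  have "(\<integral>\<omega>. indicator A \<omega> * u \<omega> \<partial>M) = (\<integral>\<omega>. indicator A \<omega> * y \<omega> \<partial>M) - expectation y * p"
    using A y by (simp add: u_def right_diff_distrib p_def)
  then have "(\<integral>\<omega>. indicator A \<omega> * y \<omega> \<partial>M) / p = expectation y + d"
    using \<open>0 < p\<close> by (simp add: d_def diff_divide_distrib)
  then have "(\<integral>\<omega>. indicator A \<omega> * (y \<omega> - (\<integral>\<omega>. indicator A \<omega> * y \<omega> \<partial>M) / p)\<^sup>2 \<partial>M)
      = (\<integral>\<omega>. indicator A \<omega> * (u \<omega> + - d)\<^sup>2 \<partial>M)"
    by (simp add: u_def algebra_simps)
  also have "\<dots> = (\<integral>\<omega>. indicator A \<omega> * (u \<omega>)\<^sup>2 \<partial>M) - p * d\<^sup>2"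
    using integral_indicator_square_shift[OF A u, of "- d"] EAu
    by (simp add: p_def power2_eq_square)
  moreover have "variance y = (\<integral>\<omega>. indicator A \<omega> * (u \<omega>)\<^sup>2 \<partial>M) + (\<integral>\<omega>. indicator G \<omega> * (u \<omega>)\<^sup>2 \<partial>M)"
    using integral_indicator_compl_add[OF G u(2)] unfolding A_def u_def by simp
  moreover have "p * d\<^sup>2 \<le> (\<integral>\<omega>. indicator G \<omega> * (u \<omega>)\<^sup>2 \<partial>M)"
    using mean_shift_off_event_le[OF G assms(2) u] y
    unfolding p_def d_def A_def u_def by (simp add: prob_space)
  ultimately show ?thesis
    unfolding A_def[symmetric] p_def[symmetric] u_def[symmetric] by linarith
qed

lemma integral_indicator_square_le:
  fixes u :: "'a \<Rightarrow> real"
  assumes G: "G \<in> events" and "prob G \<le> \<delta>" and "0 < \<delta>" and "0 < K"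
    and u: "integrable M (\<lambda>\<omega>. (u \<omega>)\<^sup>2)" "integrable M (\<lambda>\<omega>. u \<omega> ^ 4)"
    and "expectation (\<lambda>\<omega>. u \<omega> ^ 4) \<le> K\<^sup>2"
  shows "(\<integral>\<omega>. indicator G \<omega> * (u \<omega>)\<^sup>2 \<partial>M) \<le> K * sqrt \<delta>"
proof -
  \<comment> \<open>AM-GM with the weight t that balances the two terms: a Cauchy-Schwarz bound in disguise.\<close>
  define t where "t = K / sqrt \<delta>"
  have "0 < t"
    using assms by (simp add: t_def)
  have amgm: "indicator G \<omega> * (u \<omega>)\<^sup>2 \<le> (t * indicator G \<omega> + u \<omega> ^ 4 / t) / 2" for \<omega>
  proof (cases "\<omega> \<in> G")
    case True
    have "2 * t * (u \<omega>)\<^sup>2 \<le> t\<^sup>2 + ((u \<omega>)\<^sup>2)\<^sup>2"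
      by (rule sum_squares_bound)
    then show ?thesis
      using True \<open>0 < t\<close> by (simp add: field_simps power2_eq_square power4_eq_xxxx)
  qed (use \<open>0 < t\<close> in simp)
  have "(\<integral>\<omega>. indicator G \<omega> * (u \<omega>)\<^sup>2 \<partial>M) \<le> (\<integral>\<omega>. (t * indicator G \<omega> + u \<omega> ^ 4 / t) / 2 \<partial>M)"
    using G u amgm by (intro integral_mono) auto
  also have "\<dots> = (t * prob G + expectation (\<lambda>\<omega>. u \<omega> ^ 4) / t) / 2"
    using G u by simp
  also have "\<dots> \<le> (t * \<delta> + K\<^sup>2 / t) / 2"
    using assms \<open>0 < t\<close> by (intro divide_right_mono add_mono mult_left_mono) auto
  also have "\<dots> = K * sqrt \<delta>"
    using assms by (simp add: t_def field_simps power2_eq_square)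
  finally show ?thesis .
qed

lemma conditional_variance_ge:
  fixes y :: "'a \<Rightarrow> real"
  assumes G: "G \<in> events" "prob G \<le> \<delta>" "0 < \<delta>" "\<delta> \<le> 1/2" and "0 < K"
    and y: "y \<in> borel_measurable M" "integrable M (\<lambda>\<omega>. y \<omega> ^ 4)"
    and "expectation (\<lambda>\<omega>. (y \<omega> - expectation y) ^ 4) \<le> K\<^sup>2"
  shows "variance y - 2 * K * sqrt \<delta>
    \<le> (\<integral>\<omega>. indicator (space M - G) \<omega> *
          (y \<omega> - (\<integral>\<omega>. indicator (space M - G) \<omega> * y \<omega> \<partial>M) / prob (space M - G))\<^sup>2 \<partial>M)
        / prob (space M - G)"
    (is "_ \<le> ?E / ?p")
proof -
  have "variance y - 2 * K * sqrt \<delta>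
      \<le> variance y - 2 * (\<integral>\<omega>. indicator G \<omega> * (y \<omega> - expectation y)\<^sup>2 \<partial>M)"
    using integral_indicator_square_le[OF G(1-3) \<open>0 < K\<close>] assms
      integrable_shifted_power[OF y, of 2 "expectation y"] integrable_shifted_power[OF y, of 4 "expectation y"]
    by simp
  also have "\<dots> \<le> ?E"
    using second_moment_off_event_ge[OF G(1)] G
      integrable_shifted_power[OF y, of 1 0] integrable_shifted_power[OF y, of 2 0]
    by simp
  also have "\<dots> \<le> ?E / ?p"
  proof -
    have "0 < ?p" "?p \<le> 1" "0 \<le> ?E"
      using prob_compl[OF G(1)] G by (auto intro!: integral_nonneg_AE)
    then show ?thesis
      by (simp add: le_divide_eq mult_left_le)
  qed
  finally show ?thesis .
qed

end

section \<open>Quadratic forms of covariance matrices\<close>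

lemma psd_ge_iff: "psd_ge A B \<longleftrightarrow> (\<forall>v. v \<bullet> (B *v v) \<le> v \<bullet> (A *v v))"
  by (simp add: psd_ge_def matrix_vector_mult_diff_rdistrib inner_diff_right)

lemma inner_scaleR_mat_1: "v \<bullet> ((c *\<^sub>R mat 1) *v v) = c * (v \<bullet> v)"
  for v :: "real^'n"
  by (simp flip: scaleR_matrix_vector_assoc)

lemma psd_ge_scaled_identity_trans:
  fixes A B :: "real^'n^'n"
  assumes "psd_ge A (B - c *\<^sub>R mat 1)" and "psd_ge B (\<rho> *\<^sub>R mat 1)" and "c \<le> c'"
  shows "psd_ge A ((\<rho> - c') *\<^sub>R mat 1)"
  unfolding psd_ge_iff
proof
  fix v :: "real^'n"
  have "c * (v \<bullet> v) \<le> c' * (v \<bullet> v)"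
    using \<open>c \<le> c'\<close> by (rule mult_right_mono) simp
  moreover have "v \<bullet> (B *v v) - c * (v \<bullet> v) \<le> v \<bullet> (A *v v)"
    using assms(1)[unfolded psd_ge_iff, rule_format, of v]
    by (simp add: matrix_vector_mult_diff_rdistrib inner_diff_right inner_scaleR_mat_1)
  moreover have "\<rho> * (v \<bullet> v) \<le> v \<bullet> (B *v v)"
    using assms(2)[unfolded psd_ge_iff, rule_format, of v] by (simp add: inner_scaleR_mat_1)
  ultimately show "v \<bullet> (((\<rho> - c') *\<^sub>R mat 1) *v v) \<le> v \<bullet> (A *v v)"
    by (simp add: inner_scaleR_mat_1 left_diff_distrib)
qed

lemma borel_measurable_component:
  fixes x :: "'a \<Rightarrow> real^'n"
  assumes "x \<in> borel_measurable M"
  shows "(\<lambda>\<omega>. x \<omega> $ i) \<in> borel_measurable M"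
proof -
  have "(\<lambda>\<omega>. x \<omega> \<bullet> axis i 1) \<in> borel_measurable M"
    using assms by measurable
  then show ?thesis
    by (simp add: inner_axis)
qed

lemma
  fixes x :: "'a \<Rightarrow> real^'n"
  assumes "finite_measure M" and x: "x \<in> borel_measurable M"
    and x4: "integrable M (\<lambda>\<omega>. norm (x \<omega>) ^ 4)"
  shows integrable_component: "integrable M (\<lambda>\<omega>. x \<omega> $ i)"
    and integrable_component_product: "integrable M (\<lambda>\<omega>. (x \<omega> $ i - a) * (x \<omega> $ j - b))"
    and integrable_inner_power_four: "integrable M (\<lambda>\<omega>. (v \<bullet> x \<omega>) ^ 4)"
proof -
  note dominated = integrable_abs_le_affine_power[OF assms(1) x4]
  note [measurable] = borel_measurable_component[OF x] x
  show "integrable M (\<lambda>\<omega>. x \<omega> $ i)"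
    by (rule dominated[where k = 1 and \<alpha> = 1 and \<beta> = 0]) (auto simp: component_le_norm_cart)
  have "\<bar>v \<bullet> x \<omega>\<bar> ^ 4 \<le> (norm v * norm (x \<omega>)) ^ 4" for \<omega>
    by (intro power_mono Cauchy_Schwarz_ineq2) auto
  then have "\<bar>(v \<bullet> x \<omega>) ^ 4\<bar> \<le> (norm v * norm (x \<omega>) + 0) ^ 4" for \<omega>
    by (simp add: power_abs)
  then show "integrable M (\<lambda>\<omega>. (v \<bullet> x \<omega>) ^ 4)"
    by (intro dominated[where k = 4 and \<alpha> = "norm v" and \<beta> = 0]) auto
  have "\<bar>x \<omega> $ k - c\<bar> \<le> norm (x \<omega>) + (\<bar>a\<bar> + \<bar>b\<bar>)" if "\<bar>c\<bar> \<le> \<bar>a\<bar> + \<bar>b\<bar>" for \<omega> k c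
    using component_le_norm_cart[of "x \<omega>" k] that by linarith
  then show "integrable M (\<lambda>\<omega>. (x \<omega> $ i - a) * (x \<omega> $ j - b))"
    by (intro dominated[where k = 2 and \<alpha> = 1 and \<beta> = "\<bar>a\<bar> + \<bar>b\<bar>"])
      (auto simp: abs_mult power2_eq_square intro!: mult_mono)
qed

lemma integral_inner_power_four_le:
  fixes x :: "'a \<Rightarrow> real^'n"
  assumes "integrable M (\<lambda>\<omega>. (v \<bullet> x \<omega>) ^ 4)" and "integrable M (\<lambda>\<omega>. norm (x \<omega>) ^ 4)"
  shows "(\<integral>\<omega>. (v \<bullet> x \<omega>) ^ 4 \<partial>M) \<le> norm v ^ 4 * (\<integral>\<omega>. norm (x \<omega>) ^ 4 \<partial>M)"
proof -
  have "(\<integral>\<omega>. (v \<bullet> x \<omega>) ^ 4 \<partial>M) \<le> (\<integral>\<omega>. norm v ^ 4 * norm (x \<omega>) ^ 4 \<partial>M)"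
  proof (rule integral_mono)
    fix \<omega>
    have "\<bar>v \<bullet> x \<omega>\<bar> ^ 4 \<le> (norm v * norm (x \<omega>)) ^ 4"
      by (intro power_mono Cauchy_Schwarz_ineq2) auto
    then show "(v \<bullet> x \<omega>) ^ 4 \<le> norm v ^ 4 * norm (x \<omega>) ^ 4"
      by (simp add: power_mult_distrib)
  qed (use assms in auto)
  then show ?thesis
    by simp
qed

lemma inner_matrix_of_integrals:
  fixes x :: "'a \<Rightarrow> real^'n" and h :: "'a \<Rightarrow> real"
  assumes "\<And>i j. integrable M (\<lambda>\<omega>. h \<omega> * ((x \<omega> $ i - m $ i) * (x \<omega> $ j - m $ j)))"
  shows "v \<bullet> ((\<chi> i j. (\<integral>\<omega>. h \<omega> * ((x \<omega> $ i - m $ i) * (x \<omega> $ j - m $ j)) \<partial>M) / p) *v v)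
    = (\<integral>\<omega>. h \<omega> * (v \<bullet> (x \<omega> - m))\<^sup>2 \<partial>M) / p"
proof -
  have "h \<omega> * (v \<bullet> (x \<omega> - m))\<^sup>2
      = (\<Sum>i\<in>UNIV. \<Sum>j\<in>UNIV. v $ i * v $ j * (h \<omega> * ((x \<omega> $ i - m $ i) * (x \<omega> $ j - m $ j))))"
    for \<omega>
    by (simp add: inner_vec_def power2_eq_square sum_product sum_distrib_left algebra_simps)
  then have "(\<integral>\<omega>. h \<omega> * (v \<bullet> (x \<omega> - m))\<^sup>2 \<partial>M) = (\<Sum>i\<in>UNIV. \<Sum>j\<in>UNIV.
      v $ i * v $ j * (\<integral>\<omega>. h \<omega> * ((x \<omega> $ i - m $ i) * (x \<omega> $ j - m $ j)) \<partial>M))"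
    using assms by (simp add: integral_sum)
  then show ?thesis
    by (simp add: inner_vec_def matrix_vector_mult_def sum_distrib_left sum_divide_distrib algebra_simps)
qed

lemma inner_mean_vec:
  fixes x :: "'a \<Rightarrow> real^'n"
  assumes "\<And>i. integrable M (\<lambda>\<omega>. x \<omega> $ i)"
  shows "v \<bullet> mean_vec M x = (\<integral>\<omega>. v \<bullet> x \<omega> \<partial>M)"
  using assms by (simp add: mean_vec_def inner_vec_def integral_sum)

lemma inner_cond_mean_vec:
  fixes x :: "'a \<Rightarrow> real^'n"
  assumes "A \<in> sets M" and "\<And>i. integrable M (\<lambda>\<omega>. x \<omega> $ i)"
  shows "v \<bullet> cond_mean_vec M A x = (\<integral>\<omega>. indicator A \<omega> * (v \<bullet> x \<omega>) \<partial>M) / measure M A"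
proof -
  have "integrable M (\<lambda>\<omega>. v $ i * (indicator A \<omega> * x \<omega> $ i))" for i
    using integrable_mult_indicator[OF assms] by simp
  then have "(\<Sum>i\<in>UNIV. v $ i * (\<integral>\<omega>. indicator A \<omega> * x \<omega> $ i \<partial>M))
      = (\<integral>\<omega>. (\<Sum>i\<in>UNIV. v $ i * (indicator A \<omega> * x \<omega> $ i)) \<partial>M)"
    by (simp add: integral_sum)
  also have "\<dots> = (\<integral>\<omega>. indicator A \<omega> * (v \<bullet> x \<omega>) \<partial>M)"
    by (simp add: inner_vec_def sum_distrib_left algebra_simps)
  finally show ?thesis
    by (simp add: cond_mean_vec_def inner_vec_def flip: sum_divide_distrib)
qed

lemma inner_cov_mat:
  fixes x :: "'a \<Rightarrow> real^'n"
  assumes comp: "\<And>i. integrable M (\<lambda>\<omega>. x \<omega> $ i)"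
    and prod: "\<And>i j a b. integrable M (\<lambda>\<omega>. (x \<omega> $ i - a) * (x \<omega> $ j - b))"
  shows "v \<bullet> (cov_mat M x *v v) = (\<integral>\<omega>. (v \<bullet> x \<omega> - (\<integral>\<omega>. v \<bullet> x \<omega> \<partial>M))\<^sup>2 \<partial>M)"
proof -
  define m where "m = mean_vec M x"
  have "cov_mat M x = (\<chi> i j. (\<integral>\<omega>. 1 * ((x \<omega> $ i - m $ i) * (x \<omega> $ j - m $ j)) \<partial>M) / 1)"
    by (simp add: cov_mat_def m_def Let_def)
  then have "v \<bullet> (cov_mat M x *v v) = (\<integral>\<omega>. 1 * (v \<bullet> (x \<omega> - m))\<^sup>2 \<partial>M) / 1"
    using inner_matrix_of_integrals[of M "\<lambda>_. 1" x m v 1] prod by simp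
  also have "\<dots> = (\<integral>\<omega>. (v \<bullet> x \<omega> - (\<integral>\<omega>. v \<bullet> x \<omega> \<partial>M))\<^sup>2 \<partial>M)"
    using inner_mean_vec[OF comp] by (simp add: m_def inner_diff_right)
  finally show ?thesis .
qed

lemma inner_cond_cov_mat:
  fixes x :: "'a \<Rightarrow> real^'n"
  assumes A: "A \<in> sets M" and comp: "\<And>i. integrable M (\<lambda>\<omega>. x \<omega> $ i)"
    and prod: "\<And>i j a b. integrable M (\<lambda>\<omega>. (x \<omega> $ i - a) * (x \<omega> $ j - b))"
  shows "v \<bullet> (cond_cov_mat M A x *v v) = (\<integral>\<omega>. indicator A \<omega> *
      (v \<bullet> x \<omega> - (\<integral>\<omega>. indicator A \<omega> * (v \<bullet> x \<omega>) \<partial>M) / measure M A)\<^sup>2 \<partial>M) / measure M A"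
proof -
  define m where "m = cond_mean_vec M A x"
  have "integrable M (\<lambda>\<omega>. indicator A \<omega> * ((x \<omega> $ i - m $ i) * (x \<omega> $ j - m $ j)))" for i j
    using integrable_mult_indicator[OF A prod] by simp
  then have "v \<bullet> (cond_cov_mat M A x *v v)
      = (\<integral>\<omega>. indicator A \<omega> * (v \<bullet> (x \<omega> - m))\<^sup>2 \<partial>M) / measure M A"
    using inner_matrix_of_integrals[of M "indicator A" x m v "measure M A"]
    by (simp add: cond_cov_mat_def m_def Let_def)
  also have "\<dots> = (\<integral>\<omega>. indicator A \<omega> *
      (v \<bullet> x \<omega> - (\<integral>\<omega>. indicator A \<omega> * (v \<bullet> x \<omega>) \<partial>M) / measure M A)\<^sup>2 \<partial>M) / measure M A"
    using inner_cond_mean_vec[OF A comp] by (simp add: m_def inner_diff_right)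
  finally show ?thesis .
qed

lemma eight_sqrt_72_pow4_le: "8 * sqrt (72 * \<kappa> ^ 4) \<le> 105 * \<kappa>\<^sup>2" for \<kappa> :: real
proof -
  have "sqrt (\<kappa> ^ 4) = \<kappa>\<^sup>2"
    by (rule real_sqrt_unique) (simp_all flip: power_mult)
  then have "sqrt (72 * \<kappa> ^ 4) = sqrt 72 * \<kappa>\<^sup>2"
    by (simp add: real_sqrt_mult)
  moreover have "sqrt 72 \<le> sqrt ((105 / 8)\<^sup>2)"
    by (simp add: power2_eq_square)
  then have "8 * sqrt 72 * \<kappa>\<^sup>2 \<le> 105 * \<kappa>\<^sup>2"
    by (intro mult_right_mono) auto
  ultimately show ?thesis
    by (simp add: mult.assoc)
qed

lemma (in prob_space) inner_central_fourth_moment_le: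
  fixes x :: "'a \<Rightarrow> real^'n"
  assumes x: "x \<in> borel_measurable M" and x4: "integrable M (\<lambda>\<omega>. norm (x \<omega>) ^ 4)"
    and "(\<integral>\<omega>. norm (x \<omega>) ^ 4 \<partial>M) \<le> B" and "0 \<le> B"
  shows "expectation (\<lambda>\<omega>. (v \<bullet> x \<omega> - expectation (\<lambda>\<omega>. v \<bullet> x \<omega>)) ^ 4)
    \<le> (4 * (norm v)\<^sup>2 * sqrt B)\<^sup>2"
proof -
  have y4: "integrable M (\<lambda>\<omega>. (v \<bullet> x \<omega>) ^ 4)"
    by (rule integrable_inner_power_four[OF finite_measure_axioms x x4])
  have "expectation (\<lambda>\<omega>. (v \<bullet> x \<omega> - expectation (\<lambda>\<omega>. v \<bullet> x \<omega>)) ^ 4)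
      \<le> 16 * expectation (\<lambda>\<omega>. (v \<bullet> x \<omega>) ^ 4)"
    using x y4 by (intro central_fourth_moment_le) auto
  also have "\<dots> \<le> 16 * (norm v ^ 4 * B)"
    using integral_inner_power_four_le[OF y4 x4] mult_left_mono[OF assms(3), of "norm v ^ 4"] by simp
  also have "\<dots> = (4 * (norm v)\<^sup>2 * sqrt B)\<^sup>2"
    using \<open>0 \<le> B\<close> by (simp add: power_mult_distrib)
  finally show ?thesis .
qed

lemma psd_ge_cond_cov_mat:
  fixes x :: "'a \<Rightarrow> real^'n"
  assumes "prob_space M" and x: "x \<in> borel_measurable M"
    and x4: "integrable M (\<lambda>\<omega>. norm (x \<omega>) ^ 4)" and "(\<integral>\<omega>. norm (x \<omega>) ^ 4 \<partial>M) \<le> B"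
    and "0 < B"
    and G: "G \<in> sets M" "measure M G \<le> \<delta>" "0 < \<delta>" "\<delta> \<le> 1/2"
  shows "psd_ge (cond_cov_mat M (space M - G) x) (cov_mat M x - (8 * sqrt B * sqrt \<delta>) *\<^sub>R mat 1)"
  unfolding psd_ge_iff
proof
  interpret prob_space M by fact
  fix v :: "real^'n"
  define y where "y \<omega> = v \<bullet> x \<omega>" for \<omega>
  have fin: "finite_measure M" by unfold_locales
  note comp = integrable_component[OF fin x x4] and prod = integrable_component_product[OF fin x x4]
  have [measurable]: "y \<in> borel_measurable M"
    unfolding y_def using x by measurable
  have y4: "integrable M (\<lambda>\<omega>. y \<omega> ^ 4)"
    unfolding y_def by (rule integrable_inner_power_four[OF fin x x4])
  have cov: "v \<bullet> (cov_mat M x *v v) = variance y"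
    unfolding y_def by (rule inner_cov_mat[OF comp prod])
  have cond: "v \<bullet> (cond_cov_mat M (space M - G) x *v v)
      = (\<integral>\<omega>. indicator (space M - G) \<omega> *
          (y \<omega> - (\<integral>\<omega>. indicator (space M - G) \<omega> * y \<omega> \<partial>M) / prob (space M - G))\<^sup>2 \<partial>M)
        / prob (space M - G)"
    unfolding y_def using G by (intro inner_cond_cov_mat[OF _ comp prod]) auto
  show "v \<bullet> ((cov_mat M x - (8 * sqrt B * sqrt \<delta>) *\<^sub>R mat 1) *v v)
      \<le> v \<bullet> (cond_cov_mat M (space M - G) x *v v)"
  proof (cases "v = 0")
    case False
    define K where "K = 4 * (norm v)\<^sup>2 * sqrt B"
    have "expectation (\<lambda>\<omega>. (y \<omega> - expectation y) ^ 4) \<le> K\<^sup>2"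
      unfolding y_def K_def using assms by (intro inner_central_fourth_moment_le) auto
    then have "variance y - 2 * K * sqrt \<delta> \<le> v \<bullet> (cond_cov_mat M (space M - G) x *v v)"
      unfolding cond using G False \<open>0 < B\<close> y4
      by (intro conditional_variance_ge) (auto simp: K_def)
    then show ?thesis
      using cov by (simp add: matrix_vector_mult_diff_rdistrib inner_diff_right inner_scaleR_mat_1
          K_def power2_norm_eq_inner algebra_simps)
  qed simp
qed

theorem lemma12:
  fixes M :: "'a measure" and x :: "'a \<Rightarrow> real^'n"
    and \<kappa> \<rho> \<delta> :: real and G :: "'a set"
  assumes "prob_space M"
    and "x \<in> borel_measurable M"
    and "\<kappa> > 0" and "\<rho> > 0"
    and tail: "\<forall>u::real. measure M {\<omega> \<in> space M. norm (x \<omega>) > u}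
                 \<le> 2 * exp (- u\<^sup>2 / (2 * \<kappa>\<^sup>2))"
    and cov: "psd_ge (cov_mat M x) (\<rho> *\<^sub>R mat 1)"
    and "0 < \<delta>" and "\<delta> < 1/2"
    and "G \<in> sets M" and "measure M G \<le> \<delta>"
  shows "psd_ge (cond_cov_mat M (space M - G) x) ((\<rho> - 105 * \<kappa>\<^sup>2 * sqrt \<delta>) *\<^sub>R mat 1)"
proof -
  have "integrable M (\<lambda>\<omega>. norm (x \<omega>) ^ 4)" and "(\<integral>\<omega>. norm (x \<omega>) ^ 4 \<partial>M) \<le> 72 * \<kappa> ^ 4"
    using subgaussian_fourth_moment[of M "\<lambda>\<omega>. norm (x \<omega>)" \<kappa>] assms by auto
  then have "psd_ge (cond_cov_mat M (space M - G) x)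
      (cov_mat M x - (8 * sqrt (72 * \<kappa> ^ 4) * sqrt \<delta>) *\<^sub>R mat 1)"
    using assms by (intro psd_ge_cond_cov_mat) auto
  moreover have "8 * sqrt (72 * \<kappa> ^ 4) * sqrt \<delta> \<le> 105 * \<kappa>\<^sup>2 * sqrt \<delta>"
    using eight_sqrt_72_pow4_le[of \<kappa>] by (rule mult_right_mono) (use \<open>0 < \<delta>\<close> in simp)
  ultimately show ?thesis
    by (rule psd_ge_scaled_identity_trans[OF _ cov])
qed

end
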